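(* In the setting described in the context, for any $n\ge1$, any $1\le k\le n$ and any $\tau'\in\mathcal{S}_{n-k}$, the set $$\Big\{\tau\in\mathcal{T}_n:\tau\prec\tau',\ \mathcal{I}(\tau)\cap\bigcup_{P\in\mathcal{C}_{n,k}}\Delta(P)\neq\emptyset\Big\}$$ contains at most two vertices.
   Context: Standing setup. Let $s,t>0$ with $s+t=1$, and let $\theta\in\mathbb{R}$ with $\inf_{q\in\mathbb{N}}q^{1/s}\|q\theta\|>0$, where $\|x\|$ is the distance from $x$ to the nearest integer. Let $\beta\in(0,1)$, let $A_0$ be a compact interval of length $l>0$, let $R=16\beta^{-4}$, and let $c=\min\{\inf_{q\in\mathbb{N}}q^{1/s}\|q\theta\|,\ \tfrac14 lR^{-1},\ \tfrac18R^{-2-3/t^2}\}$. Rational points are written $P=(p/q,r/q)$ with $q>0$ and $p,q,r$ coprime integers. Let $\mathcal{C}=\{(p/q,r/q)\in\mathbb{Q}^2:|\theta-p/q|<c/q^{1+s}\}$ and $\Delta(P)=\{y\in\mathbb{R}:|y-r/q|<c/q^{1+t}\}$. Non-vertical rational lines are written $L(A,B,C)=\{(x,y):y=(Ax+C)/B\}$ with $A,B,C$ coprime integers, $B>0$. For each $P=(p/q,r/q)\in\mathcal{C}$ fix a line $L_P=L(A_P,B_P,C_P)$ passing through $P$ with $|A_P|\le q^s$ and $B_P\le q^t$ (such a line exists). Let $H_n=4cl^{-1}R^n$ and $\mathcal{C}_n=\{P=(p/q,r/q)\in\mathcal{C}:H_n\le qB_P<H_{n+1}\}$ for $n\ge1$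 (these partition $\mathcal{C}$). Let $\lambda=3/t^2$, $\mu=1/(t(1+t))$, $\mathcal{C}_{n,1}=\{P\in\mathcal{C}_n:H_{n+1}^{t/(1+t)}R^{-\lambda}\le B_P<H_{n+1}^{t/(1+t)}\}$ and, for $2\le k\le n$, $\mathcal{C}_{n,k}=\{P\in\mathcal{C}_n:H_{n+1}^{t/(1+t)}R^{-\lambda-(k-1)\mu}\le B_P<H_{n+1}^{t/(1+t)}R^{-\lambda-(k-2)\mu}\}$. Let $\mathcal{T}$ be an $[R]$-regular rooted tree with root $\tau_0$ ($[\cdot]$ = integer part), $\mathcal{T}_n$ its vertices of height $n$, and $\tau\prec\tau'$ meaning $\tau'$ is an ancestor of $\tau$ (possibly equal). Fix an injective map $\mathcal{I}$ from $\mathcal{T}$ to closed subintervals of $A_0$ with $|\mathcal{I}(\tau)|=lR^{-n}$ for $\tau\in\mathcal{T}_n$, $\mathcal{I}(\tau)\subset\mathcal{I}(\tau')$ whenever $\tau\prec\tau'$, and such that for each $\tau'$ the intervals $\mathcal{I}(\tau)$ over successors $\tau$ of $\tau'$ have pairwise disjoint interiors and connected union. Define $\mathcal{S}_0=\{\tau_0\}$ and for $n\ge1$, $\mathcal{S}_n=\{\tau:\tau$ is a successor of some vertex in $\mathcal{S}_{n-1}$ and $\mathcal{I}(\tau)\cap\bigcup_{P\in\mathcal{C}_n}\Delta(P)=\emptyset\}$. *)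

theory Defs
  imports "HOL-Analysis.Analysis" "HOL-Library.Sublist"
begin

definition nid :: "real \<Rightarrow> real" where
  "nid x = min (frac x) (1 - frac x)"

definition Rpar :: "real \<Rightarrow> real" where
  "Rpar \<beta> = 16 * \<beta> powr (-4)"

definition dioph_inf :: "real \<Rightarrow> real \<Rightarrow> real" where
  "dioph_inf s \<theta> = (INF q \<in> {1::nat..}. real q powr (1/s) * nid (real q * \<theta>))"

definition cconst :: "real \<Rightarrow> real \<Rightarrow> real \<Rightarrow> real \<Rightarrow> real \<Rightarrow> real" where
  "cconst s t \<theta> \<beta> l = min (dioph_inf s \<theta>)
      (min (1/4 * l * (Rpar \<beta>) powr (-1)) (1/8 * (Rpar \<beta>) powr (-2 - 3 / t^2)))"

text \<open>Rational points (p/q, r/q) are represented by the integer triple (p,q,r) with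
  q > 0 and p, q, r coprime (i.e. gcd p q r = 1); this representation is unique.\<close>
definition ratpt :: "int \<times> int \<times> int \<Rightarrow> bool" where
  "ratpt P = (case P of (p,q,r) \<Rightarrow> q > 0 \<and> gcd p (gcd q r) = 1)"

definition Cset :: "real \<Rightarrow> real \<Rightarrow> real \<Rightarrow> (int \<times> int \<times> int) set" where
  "Cset s \<theta> c = {(p,q,r). ratpt (p,q,r) \<and> \<bar>\<theta> - real_of_int p / real_of_int q\<bar> < c / real_of_int q powr (1+s)}"

definition Delta :: "real \<Rightarrow> real \<Rightarrow> int \<times> int \<times> int \<Rightarrow> real set" where
  "Delta t c P = (case P of (p,q,r) \<Rightarrow>
      {y. \<bar>y - real_of_int r / real_of_int q\<bar> < c / real_of_int q powr (1+t)})"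

definition line_through :: "int \<times> int \<times> int \<Rightarrow> int \<times> int \<times> int \<Rightarrow> bool" where
  "line_through Lc P = (case Lc of (A,B,C) \<Rightarrow> case P of (p,q,r) \<Rightarrow>
      gcd A (gcd B C) = 1 \<and> B > 0 \<and>
      real_of_int r / real_of_int q = (real_of_int A * (real_of_int p / real_of_int q) + real_of_int C) / real_of_int B)"

definition Bof :: "int \<times> int \<times> int \<Rightarrow> int" where
  "Bof Lc = fst (snd Lc)"

definition Hn :: "real \<Rightarrow> real \<Rightarrow> real \<Rightarrow> nat \<Rightarrow> real" where
  "Hn c l R n = 4 * c * l powr (-1) * R ^ n"

text \<open>C_n, using the fixed choice of lines L (L P = (A_P, B_P, C_P)).\<close>
definition Cn :: "real \<Rightarrow> real \<Rightarrow> real \<Rightarrow> real \<Rightarrow> real \<Rightarrow> (int \<times> int \<times> int \<Rightarrow> int \<times> int \<times> int)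
    \<Rightarrow> nat \<Rightarrow> (int \<times> int \<times> int) set" where
  "Cn s \<theta> c l R L n = {P \<in> Cset s \<theta> c.
      Hn c l R n \<le> real_of_int (fst (snd P) * Bof (L P)) \<and>
      real_of_int (fst (snd P) * Bof (L P)) < Hn c l R (n+1)}"

definition Cnk :: "real \<Rightarrow> real \<Rightarrow> real \<Rightarrow> real \<Rightarrow> real \<Rightarrow> real \<Rightarrow> (int \<times> int \<times> int \<Rightarrow> int \<times> int \<times> int)
    \<Rightarrow> nat \<Rightarrow> nat \<Rightarrow> (int \<times> int \<times> int) set" where
  "Cnk s t \<theta> c l R L n k =
     (let H = Hn c l R (n+1) powr (t/(1+t)); lam = 3 / t^2; \<mu> = 1 / (t*(1+t)) in
      if k = 1 then {P \<in> Cn s \<theta> c l R L n.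
          H * R powr (-lam) \<le> real_of_int (Bof (L P)) \<and> real_of_int (Bof (L P)) < H}
      else if 2 \<le> k \<and> k \<le> n then {P \<in> Cn s \<theta> c l R L n.
          H * R powr (-lam - (real k - 1) * \<mu>) \<le> real_of_int (Bof (L P)) \<and>
          real_of_int (Bof (L P)) < H * R powr (-lam - (real k - 2) * \<mu>)}
      else {})"

text \<open>The [R]-regular rooted tree: vertices are lists over {..<m}, m = [R]; the root is [],
  the height of a vertex is its length, the successors of v are v @ [i] (i < m), and
  "tau \<prec> tau'" (tau' ancestor of tau, possibly equal) is "prefix tau' tau".\<close>
definition tree :: "nat \<Rightarrow> nat list set" where
  "tree m = {v. set v \<subseteq> {..<m}}"

definition good_I :: "nat \<Rightarrow> real \<Rightarrow> real \<Rightarrow> real \<Rightarrow> (nat list \<Rightarrow> real set) \<Rightarrow> bool" where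
  "good_I m R a b I \<longleftrightarrow>
     inj_on I (tree m) \<and>
     (\<forall>v \<in> tree m. (\<exists>u. I v = {u .. u + (b - a) * R powr (- real (length v))}) \<and> I v \<subseteq> {a..b}) \<and>
     (\<forall>v \<in> tree m. \<forall>w \<in> tree m. prefix w v \<longrightarrow> I v \<subseteq> I w) \<and>
     (\<forall>v \<in> tree m. \<forall>i<m. \<forall>j<m. i \<noteq> j \<longrightarrow> interior (I (v @ [i])) \<inter> interior (I (v @ [j])) = {}) \<and>
     (\<forall>v \<in> tree m. connected (\<Union>i<m. I (v @ [i])))"

text \<open>S_n; bad n is the union of Delta(P) over P in C_n.\<close>
fun Sset :: "nat \<Rightarrow> (nat list \<Rightarrow> real set) \<Rightarrow> (nat \<Rightarrow> real set) \<Rightarrow> nat \<Rightarrow> nat list set" where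
  "Sset m I bad 0 = {[]}"
| "Sset m I bad (Suc n) = {v @ [i] | v i. v \<in> Sset m I bad n \<and> i < m \<and> I (v @ [i]) \<inter> bad (Suc n) = {}}"

end

theory Submission
  imports Defs
begin

(* The heart of the argument is that all P in C_(n,k) whose Delta(P) meets I(tau') have the
   same line L_P.  Given two such points P1, P2 with lines L1, L2 we compare approximations:
   - for k = 1 (the top band of line denominators) the integer A2 p1 + C2 q1 - B2 r1 is
     smaller than 1, so each point lies on the other's line, and the points or lines coincide;
   - for k >= 2, either the lines are parallel, and then equal, or their intersection is a
     rational point approximating (theta, y) well enough to lie in C and to have Delta
     containing y, but of a level below n - k; this contradicts tau' in S_(n-k).
   With a common line, every such Delta(P) lies within l R^-n / 4 of the value of the line at
   theta, so it can meet at most two of the intervals of length l R^-n below tau'. *)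

section \<open>Primitive integer triples, rational points and lines\<close>

lemma dvd_of_dvd_primitive_multiples:
  fixes a b c x y :: int
  assumes "gcd a (gcd b c) = 1" "x dvd a * y" "x dvd b * y" "x dvd c * y"
  shows "x dvd y"
proof -
  have "x dvd gcd (y * a) (gcd (y * b) (y * c))"
    using assms(2-4) by (simp add: mult.commute)
  also have "gcd (y * a) (gcd (y * b) (y * c)) = \<bar>y\<bar>"
    using assms(1) by (simp add: gcd_mult_left)
  finally show ?thesis by simp
qed

lemma primitive_triples_eq:
  fixes a1 b1 c1 a2 b2 c2 :: int
  assumes g1: "gcd a1 (gcd b1 c1) = 1" and g2: "gcd a2 (gcd b2 c2) = 1"
    and b1: "b1 > 0" and b2: "b2 > 0"
    and ea: "a1 * b2 = a2 * b1" and ec: "c1 * b2 = c2 * b1"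
  shows "a1 = a2 \<and> b1 = b2 \<and> c1 = c2"
proof -
  have "b1 dvd b2"
    by (rule dvd_of_dvd_primitive_multiples[OF g1]) (use ea ec in \<open>simp_all add: mult.commute\<close>)
  moreover have "b2 dvd b1"
    by (rule dvd_of_dvd_primitive_multiples[OF g2]) (use ea ec in \<open>simp_all flip: ea ec\<close>)
  ultimately have "b1 = b2" using b1 b2 by (simp add: zdvd_antisym_nonneg)
  then show ?thesis using ea ec b1 by auto
qed

text \<open>An integer smaller than 1 in absolute value vanishes; this turns the real estimates
  below into integer identities.\<close>
lemma small_int_eq_0: "\<bar>real_of_int z\<bar> < 1 \<Longrightarrow> z = 0"
  by linarith

lemma reduced_fraction_eq:
  fixes p1 q1 r1 p2 q2 r2 :: int
  assumes "ratpt (p1,q1,r1)" "ratpt (p2,q2,r2)"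
    and "real_of_int p1 / real_of_int q1 = real_of_int p2 / real_of_int q2"
    and "real_of_int r1 / real_of_int q1 = real_of_int r2 / real_of_int q2"
  shows "(p1,q1,r1) = (p2,q2,r2)"
proof -
  have q: "q1 > 0" "q2 > 0" and g: "gcd p1 (gcd q1 r1) = 1" "gcd p2 (gcd q2 r2) = 1"
    using assms(1,2) unfolding ratpt_def by auto
  have "real_of_int (p1 * q2) = real_of_int (p2 * q1)" "real_of_int (r1 * q2) = real_of_int (r2 * q1)"
    using assms(3,4) q by (simp_all add: field_simps)
  then have "p1 * q2 = p2 * q1" "r1 * q2 = r2 * q1" by (simp_all only: of_int_eq_iff)
  then show ?thesis using primitive_triples_eq[OF g q] by simp
qed

lemma reduced_fraction_exists:
  fixes D N Y :: int
  assumes D: "D \<noteq> 0"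
  shows "\<exists>p q r. ratpt (p,q,r) \<and> q \<le> \<bar>D\<bar> \<and>
           real_of_int p / real_of_int q = - real_of_int N / real_of_int D \<and>
           real_of_int r / real_of_int q = real_of_int Y / real_of_int D"
proof -
  define g where "g = gcd (- N * sgn D) (gcd \<bar>D\<bar> (Y * sgn D))"
  have gpos: "g > 0" unfolding g_def using D by simp
  obtain p q r where p: "- N * sgn D = g * p" and q: "\<bar>D\<bar> = g * q" and r: "Y * sgn D = g * r"
    unfolding g_def by (meson dvd_def gcd_dvd1 gcd_dvd2 dvd_trans)
  have "0 < g * q" using D q by simp
  then have qpos: "q > 0" using gpos zero_less_mult_pos by blast
  have "g * gcd p (gcd q r) = gcd (g*p) (gcd (g*q) (g*r))"
    using gpos by (simp add: gcd_mult_left abs_mult)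
  also have "\<dots> = g" by (simp only: flip: p q r) (simp add: g_def)
  finally have "gcd p (gcd q r) = 1" using gpos by simp
  moreover have "q \<le> \<bar>D\<bar>" using q gpos qpos by (simp add: mult_le_cancel_right1)
  moreover have "real_of_int p / real_of_int q = - real_of_int N / real_of_int D"
    "real_of_int r / real_of_int q = real_of_int Y / real_of_int D"
  proof -
    have sgn_div: "real_of_int (z * sgn D) / real_of_int \<bar>D\<bar> = real_of_int z / real_of_int D" for z
      using D by (cases "D > 0") auto
    have cancel: "real_of_int x / real_of_int q = real_of_int (g * x) / real_of_int (g * q)" for x
      using gpos by simp
    show "real_of_int p / real_of_int q = - real_of_int N / real_of_int D"
      unfolding cancel[of p] using sgn_div[of "-N"] by (simp only: flip: p q)
    show "real_of_int r / real_of_int q = real_of_int Y / real_of_int D"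
      unfolding cancel[of r] using sgn_div[of Y] by (simp only: flip: r q)
  qed
  ultimately show ?thesis using qpos by (intro exI[of _ p] exI[of _ q] exI[of _ r]) (simp add: ratpt_def)
qed

lemma lines_through_two_points_eq:
  fixes A1 B1 C1 A2 B2 C2 :: int and x1 y1 x2 y2 :: real
  assumes g1: "gcd A1 (gcd B1 C1) = 1" and g2: "gcd A2 (gcd B2 C2) = 1"
    and b: "B1 > 0" "B2 > 0" and ne: "(x1,y1) \<noteq> (x2,y2)"
    and h11: "B1*y1 = A1*x1 + C1" and h12: "B1*y2 = A1*x2 + C1"
    and h21: "B2*y1 = A2*x1 + C2" and h22: "B2*y2 = A2*x2 + C2"
  shows "(A1,B1,C1) = (A2,B2,C2)"
proof -
  have x: "x1 \<noteq> x2"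
  proof
    assume "x1 = x2"
    then have "real_of_int B1 * y1 = real_of_int B1 * y2" using h11 h12 by simp
    then show False using ne b \<open>x1 = x2\<close> by simp
  qed
  have s1: "B1*(y1 - y2) = A1*(x1 - x2)" and s2: "B2*(y1 - y2) = A2*(x1 - x2)"
    using h11 h12 h21 h22 by (simp_all add: algebra_simps)
  have "(A1*B2)*(x1 - x2) = (A2*B1)*(x1 - x2)"
    using arg_cong[OF s1, of "\<lambda>z. B2 * z"] arg_cong[OF s2, of "\<lambda>z. B1 * z"]
    by (simp add: algebra_simps)
  then have ra: "real_of_int (A1*B2) = real_of_int (A2*B1)" using x by simp
  have "real_of_int C1 * B2 = (B1*y1 - A1*x1) * B2" using h11 by simp
  also have "\<dots> = B1*(B2*y1) - real_of_int (A1*B2)*x1" by (simp add: algebra_simps)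
  also have "\<dots> = B1*(B2*y1 - A2*x1)" using ra by (simp add: algebra_simps)
  also have "\<dots> = B1*C2" using h21 by simp
  finally have "real_of_int (C1*B2) = real_of_int (C2*B1)" by simp
  then have "A1*B2 = A2*B1" "C1*B2 = C2*B1" using ra by (simp_all only: of_int_eq_iff)
  then show ?thesis using primitive_triples_eq[OF g1 g2 b] by simp
qed

lemma incidence_iff:
  fixes p q r A B C :: int
  assumes "q > 0"
  shows "real_of_int B * (real_of_int r / real_of_int q) =
      real_of_int A * (real_of_int p / real_of_int q) + real_of_int C \<longleftrightarrow> A*p + C*q = B*r"
proof -
  have "real_of_int B * (real_of_int r / real_of_int q) =
      real_of_int A * (real_of_int p / real_of_int q) + real_of_int C \<longleftrightarrow>
      real_of_int (A*p + C*q) = real_of_int (B*r)"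
    using assms by (simp add: field_simps) (rule eq_commute)
  then show ?thesis by (simp only: of_int_eq_iff)
qed

lemma points_or_lines_coincide:
  fixes p1 q1 r1 p2 q2 r2 A1 B1 C1 A2 B2 C2 :: int
  assumes P: "ratpt (p1,q1,r1)" "ratpt (p2,q2,r2)"
    and L: "gcd A1 (gcd B1 C1) = 1" "gcd A2 (gcd B2 C2) = 1" "B1 > 0" "B2 > 0"
    and on: "A1*p1 + C1*q1 = B1*r1" "A1*p2 + C1*q2 = B1*r2"
      "A2*p1 + C2*q1 = B2*r1" "A2*p2 + C2*q2 = B2*r2"
  shows "(p1,q1,r1) = (p2,q2,r2) \<or> (A1,B1,C1) = (A2,B2,C2)"
proof (cases "(real_of_int p1 / real_of_int q1, real_of_int r1 / real_of_int q1) =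
              (real_of_int p2 / real_of_int q2, real_of_int r2 / real_of_int q2)")
  case True
  then show ?thesis using reduced_fraction_eq[OF P] by simp
next
  case False
  have "q1 > 0" "q2 > 0" using P unfolding ratpt_def by auto
  then show ?thesis
    using lines_through_two_points_eq[OF L False] on incidence_iff by simp
qed

section \<open>The tree of intervals\<close>

lemma Sset_in_tree:
  "v \<in> Sset m I bad N \<Longrightarrow> v \<in> tree m \<and> length v = N"
  by (induction N arbitrary: v) (auto simp: tree_def subset_iff)

lemma Sset_take:
  assumes "v \<in> Sset m I bad N" "j \<le> N"
  shows "take j v \<in> Sset m I bad j"
  using assms
proof (induction N arbitrary: v)
  case (Suc N)
  then obtain w i where v: "v = w @ [i]" and w: "w \<in> Sset m I bad N" by auto
  show ?case
  proof (cases "j = Suc N")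
    case True
    then show ?thesis using Suc.prems Sset_in_tree[OF Suc.prems(1)] by simp
  next
    case False
    then have "take j v = take j w" using v Suc.prems(2) Sset_in_tree[OF w] by simp
    then show ?thesis using Suc.IH[OF w] False Suc.prems(2) by simp
  qed
qed simp

lemma tree_prefix: "v \<in> tree m \<Longrightarrow> prefix w v \<Longrightarrow> w \<in> tree m"
  unfolding tree_def by (auto simp: prefix_def)

lemma good_I_mono:
  "good_I m R a b I \<Longrightarrow> v \<in> tree m \<Longrightarrow> prefix w v \<Longrightarrow> I v \<subseteq> I w"
  unfolding good_I_def using tree_prefix by blast

text \<open>Distinct vertices of the same height have intervals with disjoint interiors, since
  they descend from distinct siblings.\<close>
lemma good_I_disjoint_interiors:
  assumes I: "good_I m R a b I" and v1: "v1 \<in> tree m" and v2: "v2 \<in> tree m"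
    and len: "length v1 = length v2" and ne: "v1 \<noteq> v2"
  shows "interior (I v1) \<inter> interior (I v2) = {}"
proof -
  have "v1 \<parallel> v2" using len ne unfolding parallel_def prefix_def by auto
  then obtain as x bs y cs where xy: "x \<noteq> y" and e1: "v1 = as @ x # bs" and e2: "v2 = as @ y # cs"
    using parallel_decomp by blast
  have p1: "prefix (as @ [x]) v1" and p2: "prefix (as @ [y]) v2" using e1 e2 by simp_all
  have t1: "as @ [x] \<in> tree m" and t2: "as @ [y] \<in> tree m"
    using tree_prefix[OF v1 p1] tree_prefix[OF v2 p2] .
  then have "as \<in> tree m" "x < m" "y < m" unfolding tree_def by auto
  then have "interior (I (as @ [x])) \<inter> interior (I (as @ [y])) = {}"
    using I xy unfolding good_I_def by blast
  moreover have "I v1 \<subseteq> I (as @ [x])" "I v2 \<subseteq> I (as @ [y])"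
    using good_I_mono[OF I] v1 v2 p1 p2 by blast+
  ultimately show ?thesis using interior_mono by blast
qed

lemma separated_if_disjoint_interiors:
  fixes u1 u2 d :: real
  assumes "interior {u1..u1+d} \<inter> interior {u2..u2+d} = {}"
  shows "d \<le> \<bar>u1 - u2\<bar>"
proof (rule ccontr)
  assume "\<not> ?thesis"
  then have "(u1 + u2 + d) / 2 \<in> {u1<..<u1+d} \<inter> {u2<..<u2+d}" by auto
  then show False using assms by (metis empty_iff interior_atLeastAtMost_real)
qed

lemma at_most_two_intervals_near_point:
  fixes S :: "'a set" and J :: "'a \<Rightarrow> real set" and d y :: real
  assumes fin: "finite S"
    and iv: "\<And>x. x \<in> S \<Longrightarrow> \<exists>u. J x = {u..u+d}"
    and dj: "\<And>x x'. x \<in> S \<Longrightarrow> x' \<in> S \<Longrightarrow> x \<noteq> x' \<Longrightarrow> interior (J x) \<inter> interior (J x') = {}"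
    and hit: "\<And>x. x \<in> S \<Longrightarrow> J x \<inter> {z. \<bar>z - y\<bar> < d/2} \<noteq> {}"
  shows "card S \<le> 2"
proof (rule ccontr)
  assume "\<not> card S \<le> 2"
  then obtain T where "T \<subseteq> S" "card T = 3" using obtain_subset_with_card_n[of 3 S] by force
  then obtain x1 x2 x3 where x: "{x1, x2, x3} \<subseteq> S" "x1 \<noteq> x2" "x2 \<noteq> x3" "x1 \<noteq> x3"
    by (auto simp: card_3_iff)
  have left_end: "\<exists>u. J x = {u..u+d} \<and> y - 3*d/2 < u \<and> u < y + d/2" if xS: "x \<in> S" for x
  proof -
    obtain u where u: "J x = {u..u+d}" using iv[OF xS] by blast
    with hit[OF xS] obtain z where "u \<le> z" "z \<le> u + d" "z - y < d/2" "y - z < d/2"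
      by (force simp: abs_less_iff)
    then show ?thesis using u by (intro exI[of _ u]) auto
  qed
  obtain u1 u2 u3 where u: "J x1 = {u1..u1+d}" "J x2 = {u2..u2+d}" "J x3 = {u3..u3+d}"
    and near: "y - 3*d/2 < u1" "u1 < y + d/2" "y - 3*d/2 < u2" "u2 < y + d/2"
      "y - 3*d/2 < u3" "u3 < y + d/2"
    using left_end x(1) by (metis insert_subset)
  have "d \<le> \<bar>u1 - u2\<bar>" "d \<le> \<bar>u2 - u3\<bar>" "d \<le> \<bar>u1 - u3\<bar>"
    using separated_if_disjoint_interiors dj x u by (metis insert_subset)+
  then show False using near by (auto simp: abs_real_def split: if_splits)
qed

section \<open>Two approximating points and their lines\<close>

lemma powr_one_plus: "0 < x \<Longrightarrow> (x::real) powr (1 + e) = x * x powr e"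
  by (simp add: powr_add)

lemma powr_le_one_plus: "0 < x \<Longrightarrow> 0 \<le> e \<Longrightarrow> e \<le> 1 \<Longrightarrow> (x::real) powr e \<le> 1 + x"
  by (cases "x \<le> 1") (use powr_le1[of e x] powr_mono[of e 1 x] in auto)

lemma height_times_error_le:
  fixes q h err c e :: real
  assumes "0 < q" "0 \<le> h" "h \<le> q powr e" "0 \<le> err" "err \<le> c / q powr (1 + e)"
  shows "h * err \<le> c / q"
proof -
  have "h * err \<le> q powr e * (c / q powr (1 + e))" using assms by (intro mult_mono) auto
  also have "\<dots> = c / q" using assms(1) by (simp add: powr_one_plus)
  finally show ?thesis .
qed

lemma line_residual_bound:
  fixes A B C p q r x y c s t :: real
  assumes q: "q > 0" and B: "B > 0"
    and A: "\<bar>A\<bar> \<le> q powr s" and Bt: "B \<le> q powr t"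
    and line: "B*(r/q) = A*(p/q) + C"
    and approx_x: "\<bar>x - p/q\<bar> < c / q powr (1+s)" and approx_y: "\<bar>y - r/q\<bar> < c / q powr (1+t)"
  shows "\<bar>A*x - B*y + C\<bar> < 2*c/q"
proof -
  have "A*x - B*y + C = A*(x - p/q) - B*(y - r/q)" using line by (simp add: algebra_simps)
  then have "\<bar>A*x - B*y + C\<bar> \<le> \<bar>A\<bar> * \<bar>x - p/q\<bar> + B * \<bar>y - r/q\<bar>"
    using B by (metis abs_mult abs_of_pos abs_triangle_ineq4)
  also have "\<dots> < c/q + c/q"
  proof (rule add_le_less_mono)
    show "\<bar>A\<bar> * \<bar>x - p/q\<bar> \<le> c/q"
      using approx_x q A by (intro height_times_error_le) auto
    have "B * \<bar>y - r/q\<bar> < B * (c / q powr (1+t))" using approx_y B by (rule mult_strict_left_mono)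
    also have "\<dots> \<le> c/q"
      using approx_y q B Bt by (intro height_times_error_le) auto
    finally show "B * \<bar>y - r/q\<bar> < c/q" .
  qed
  finally show ?thesis by simp
qed

text \<open>Two rational points (p_i/q_i, r_i/q_i) on lines B_i y = A_i x + C_i approximating
  (x, y_i), where y1, y2 are \<delta>-close, the products q_i B_i lie on a common level
  [M/R, M) and the denominators B_i in a common band [H/X, H).\<close>
locale approx_pair =
  fixes A1 B1 C1 p1 q1 r1 A2 B2 C2 p2 q2 r2 x y1 y2 c s t R M \<delta> H X :: real and k :: nat
  assumes pos: "q1 > 0" "q2 > 0" "B1 > 0" "B2 > 0" "c > 0"
    and st: "s > 0" "t > 0" "s + t = 1" and R: "R \<ge> 16" and X: "X \<ge> 1"
    and height: "\<bar>A1\<bar> \<le> q1 powr s" "\<bar>A2\<bar> \<le> q2 powr s" "B1 \<le> q1 powr t" "B2 \<le> q2 powr t"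
    and line: "B1*(r1/q1) = A1*(p1/q1) + C1" "B2*(r2/q2) = A2*(p2/q2) + C2"
    and approx_x: "\<bar>x - p1/q1\<bar> < c / q1 powr (1+s)" "\<bar>x - p2/q2\<bar> < c / q2 powr (1+s)"
    and approx_y: "\<bar>y1 - r1/q1\<bar> < c / q1 powr (1+t)" "\<bar>y2 - r2/q2\<bar> < c / q2 powr (1+t)"
    and close: "\<bar>y1 - y2\<bar> \<le> \<delta>" "M * \<delta> \<le> 4*c*R^(k+1)"
    and level: "M/R \<le> q1*B1" "q1*B1 < M" "M/R \<le> q2*B2" "q2*B2 < M"
    and band: "H/X \<le> B1" "B1 < H" "H/X \<le> B2" "B2 < H"

lemma approx_pair_swap:
  "approx_pair A1 B1 C1 p1 q1 r1 A2 B2 C2 p2 q2 r2 x y1 y2 c s t R M \<delta> H X k \<Longrightarrow>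
   approx_pair A2 B2 C2 p2 q2 r2 A1 B1 C1 p1 q1 r1 x y2 y1 c s t R M \<delta> H X k"
  unfolding approx_pair_def by (auto simp: abs_minus_commute)

context approx_pair
begin

lemma M_pos: "M > 0" and R_pos: "R > 0" and H_pos: "H > 0"
proof -
  have "0 < q1 * B1" using pos by simp
  then show "M > 0" using level(2) by linarith
  show "R > 0" using R by simp
  show "H > 0" using band(2) pos(3) by linarith
qed

lemma ratio_bounds: "B2 < X * B1" "B1 < X * B2" "q2 < R * X * q1" "q1 < R * X * q2"
proof -
  have HX: "H = X * (H / X)" using X by simp
  show BX: "B2 < X * B1" "B1 < X * B2"
    using band X HX mult_left_mono[of "H/X" _ X] by (smt (verit))+
  have "q2 * B2 < R * (q1 * B1)" using level R_pos by (simp add: field_simps)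
  also have "\<dots> < R * (q1 * (X * B2))" using BX pos R_pos by simp
  finally show "q2 < R * X * q1" using pos by (simp add: ac_simps)
  have "q1 * B1 < R * (q2 * B2)" using level R_pos by (simp add: field_simps)
  also have "\<dots> < R * (q2 * (X * B1))" using BX pos R_pos by simp
  finally show "q1 < R * X * q2" using pos by (simp add: ac_simps)
qed

text \<open>The two parts of the residual of the first point on the second line.\<close>
lemma x_gap_weighted: "q1 * \<bar>A2\<bar> * \<bar>p1/q1 - p2/q2\<bar> \<le> c * (1 + 2*R*X)"
proof -
  have "\<bar>p1/q1 - p2/q2\<bar> \<le> c / q1 powr (1+s) + c / q2 powr (1+s)"
    using approx_x by linarith
  then have "q1 * \<bar>A2\<bar> * \<bar>p1/q1 - p2/q2\<bar> \<le> q1 * \<bar>A2\<bar> * (c / q1 powr (1+s) + c / q2 powr (1+s))"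
    using pos by (intro mult_left_mono) auto
  also have "\<dots> = q1 * (\<bar>A2\<bar> * (c / q1 powr (1+s))) + q1 * (\<bar>A2\<bar> * (c / q2 powr (1+s)))"
    by (simp add: algebra_simps)
  also have "q1 * (\<bar>A2\<bar> * (c / q1 powr (1+s))) \<le> c * (1 + R*X)"
  proof -
    have "q1 * (\<bar>A2\<bar> * (c / q1 powr (1+s))) = c * (\<bar>A2\<bar> / q1 powr s)"
      using pos by (simp add: powr_one_plus)
    also have "\<dots> \<le> c * (q2 / q1) powr s"
      using height pos by (simp add: powr_divide divide_right_mono)
    also have "\<dots> \<le> c * (1 + q2/q1)" using powr_le_one_plus[of "q2/q1" s] pos st by simp
    also have "\<dots> \<le> c * (1 + R*X)" using ratio_bounds pos by (simp add: field_simps)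
    finally show ?thesis .
  qed
  also have "q1 * (\<bar>A2\<bar> * (c / q2 powr (1+s))) \<le> c * (R*X)"
  proof -
    have "\<bar>A2\<bar> * (c / q2 powr (1+s)) \<le> c / q2"
      using pos height by (intro height_times_error_le) auto
    then have "q1 * (\<bar>A2\<bar> * (c / q2 powr (1+s))) \<le> q1 * (c / q2)"
      using pos by (intro mult_left_mono) auto
    also have "\<dots> = c * (q1 / q2)" by simp
    also have "\<dots> \<le> c * (R*X)" using ratio_bounds pos by (simp add: field_simps)
    finally show ?thesis .
  qed
  finally show ?thesis by (simp add: algebra_simps)
qed

lemma y_gap_weighted:
  assumes "k = 1"
  shows "q1 * B2 * \<bar>r1/q1 - r2/q2\<bar> < c * X + 4*c*R^2*X + c * (R*X)"
proof -
  have "\<bar>r1/q1 - r2/q2\<bar> < c / q1 powr (1+t) + \<delta> + c / q2 powr (1+t)"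
    using approx_y close by linarith
  then have "q1 * B2 * \<bar>r1/q1 - r2/q2\<bar> < q1 * B2 * (c / q1 powr (1+t) + \<delta> + c / q2 powr (1+t))"
    using pos by (intro mult_strict_left_mono) auto
  also have "\<dots> = q1 * B2 * (c / q1 powr (1+t)) + q1 * B2 * \<delta> + q1 * (B2 * (c / q2 powr (1+t)))"
    by (simp add: algebra_simps)
  also have "q1 * B2 * (c / q1 powr (1+t)) \<le> c * X"
  proof -
    have "q1 * B2 * (c / q1 powr (1+t)) = c * B2 / q1 powr t" using pos by (simp add: powr_one_plus)
    also have "\<dots> \<le> c * B2 / B1" using height pos by (intro divide_left_mono) auto
    also have "\<dots> \<le> c * X" using ratio_bounds pos by (simp add: field_simps)
    finally show ?thesis .
  qed
  also have "q1 * B2 * \<delta> \<le> 4*c*R^2*X"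
  proof -
    have "q1 * B2 \<le> q1 * (X * B1)" using ratio_bounds(1) pos by simp
    also have "\<dots> = X * (q1 * B1)" by simp
    also have "\<dots> \<le> M * X" using level(2) X by simp
    finally have "q1 * B2 \<le> M * X" .
    then have "q1 * B2 * \<delta> \<le> M * X * \<delta>"
      using close(1) by (simp add: mult_right_mono)
    also have "\<dots> \<le> 4*c*R^2*X" using close(2) X assms by (simp add: algebra_simps power2_eq_square)
    finally show ?thesis .
  qed
  also have "q1 * (B2 * (c / q2 powr (1+t))) \<le> c * (R*X)"
  proof -
    have "B2 * (c / q2 powr (1+t)) \<le> c / q2" using pos height by (intro height_times_error_le) auto
    then have "q1 * (B2 * (c / q2 powr (1+t))) \<le> q1 * (c / q2)"
      using pos by (intro mult_left_mono) auto
    also have "\<dots> = c * (q1 / q2)" by simp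
    also have "\<dots> \<le> c * (R*X)" using ratio_bounds pos by (simp add: field_simps)
    finally show ?thesis .
  qed
  finally show ?thesis by simp
qed

lemma first_point_on_second_line:
  assumes "k = 1" and small: "8 * c * R^2 * X \<le> 1"
  shows "\<bar>A2*p1 + C2*q1 - B2*r1\<bar> < 1"
proof -
  have C2: "C2 = B2*(r2/q2) - A2*(p2/q2)" using line(2) by simp
  have "A2*p1 + C2*q1 - B2*r1 = q1 * (A2*(p1/q1 - p2/q2) - B2*(r1/q1 - r2/q2))"
    using pos by (subst C2) (simp add: field_simps)
  then have "\<bar>A2*p1 + C2*q1 - B2*r1\<bar> = q1 * \<bar>A2*(p1/q1 - p2/q2) - B2*(r1/q1 - r2/q2)\<bar>"
    using pos by (simp add: abs_mult)
  also have "\<dots> \<le> q1 * (\<bar>A2\<bar> * \<bar>p1/q1 - p2/q2\<bar> + B2 * \<bar>r1/q1 - r2/q2\<bar>)"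
    using pos by (intro mult_left_mono) (auto simp: abs_mult intro: abs_triangle_ineq4[THEN order_trans])
  also have "\<dots> = q1 * \<bar>A2\<bar> * \<bar>p1/q1 - p2/q2\<bar> + q1 * B2 * \<bar>r1/q1 - r2/q2\<bar>"
    by (simp add: algebra_simps)
  also have "\<dots> < c * (1 + 2*R*X) + (c * X + 4*c*R^2*X + c * (R*X))"
    using x_gap_weighted y_gap_weighted[OF assms(1)] by linarith
  also have "\<dots> < 8 * c * R^2 * X"
  proof -
    have "R^2 * X \<ge> 16 * (R * X)" "R * X \<ge> 16 * X"
      using R X by (simp_all add: power2_eq_square mult_right_mono)
    then have "1 + 2*R*X + X + 4*R^2*X + R*X < 8 * R^2 * X" using X by linarith
    from mult_strict_left_mono[OF this pos(5)] show ?thesis by (simp add: algebra_simps)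
  qed
  finally show ?thesis using small by linarith
qed

text \<open>The determinant and the numerators of the intersection point
  (-num_x / det12, num_y / det12) of the two lines.\<close>
abbreviation "det12 \<equiv> A1*B2 - A2*B1"
abbreviation "num_x \<equiv> B2*C1 - B1*C2"
abbreviation "num_y \<equiv> A1*C2 - A2*C1"

text \<open>Eliminating y between the two residuals shows that det12 x + num_x is small.\<close>
lemma cross_residual_bound: "\<bar>det12 * x + num_x\<bar> < 8*c*R^(k+1)*B1*B2/M"
proof -
  define e1 where "e1 = A1*x - B1*y1 + C1"
  define e2 where "e2 = A2*x - B2*y2 + C2"
  have e1: "\<bar>e1\<bar> < 2*c/q1" and e2: "\<bar>e2\<bar> < 2*c/q2" unfolding e1_def e2_def
    using line_residual_bound pos height line approx_x approx_y by blast+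
  have inv_q: "2*c/q1 \<le> 2*c*R*B1/M" "2*c/q2 \<le> 2*c*R*B2/M"
    using level pos M_pos R_pos by (simp_all add: field_simps)
  have "det12 * x + num_x = B2*e1 - B1*e2 + B1*B2*(y1 - y2)"
    unfolding e1_def e2_def by (simp add: algebra_simps)
  also have "\<bar>\<dots>\<bar> \<le> \<bar>B2*e1\<bar> + \<bar>B1*e2\<bar> + \<bar>B1*B2*(y1 - y2)\<bar>"
    by (smt (verit))
  also have "\<dots> = B2*\<bar>e1\<bar> + B1*\<bar>e2\<bar> + B1*B2*\<bar>y1 - y2\<bar>"
    using pos by (simp add: abs_mult)
  also have "\<dots> < B2*(2*c*R*B1/M) + B1*(2*c*R*B2/M) + B1*B2*(4*c*R^(k+1)/M)"
  proof -
    have "M * \<bar>y1 - y2\<bar> \<le> 4*c*R^(k+1)"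
      using close M_pos mult_left_mono[of "\<bar>y1 - y2\<bar>" \<delta> M] by linarith
    then have "\<bar>y1 - y2\<bar> \<le> 4*c*R^(k+1)/M" using M_pos by (simp add: field_simps)
    then have "B1*B2*\<bar>y1 - y2\<bar> \<le> B1*B2*(4*c*R^(k+1)/M)"
      using pos by (intro mult_left_mono) simp_all
    then show ?thesis using e1 e2 inv_q pos
      by (smt (verit, best) mult_le_cancel_left_pos mult_strict_left_mono)
  qed
  also have "\<dots> \<le> 8*c*R^(k+1)*B1*B2/M"
  proof -
    have "R \<le> R^(k+1)" using R power_increasing[of 1 "k+1" R] by simp
    then have "4*c*R*(B1*B2) \<le> 4*c*R^(k+1)*(B1*B2)" using pos by (simp add: mult_right_mono)
    then have "4*c*R*(B1*B2) + 4*c*R^(k+1)*(B1*B2) \<le> 8*c*R^(k+1)*(B1*B2)" by linarith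
    then have "(4*c*R*(B1*B2) + 4*c*R^(k+1)*(B1*B2)) / M \<le> 8*c*R^(k+1)*(B1*B2) / M"
      by (rule divide_right_mono) (use M_pos in simp)
    then show ?thesis by (simp add: add_divide_distrib algebra_simps)
  qed
  finally show ?thesis .
qed

lemma x_near_intersection:
  assumes "det12 \<noteq> 0"
  shows "\<bar>x - (- num_x / det12)\<bar> < (8*c*R^(k+1)*B1*B2/M) / \<bar>det12\<bar>"
proof -
  have "x - (- num_x / det12) = (det12 * x + num_x) / det12" using assms by (simp add: field_simps)
  then have "\<bar>x - (- num_x / det12)\<bar> = \<bar>det12 * x + num_x\<bar> / \<bar>det12\<bar>" by (simp add: abs_divide)
  also have "\<dots> < (8*c*R^(k+1)*B1*B2/M) / \<bar>det12\<bar>"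
    by (rule divide_strict_right_mono[OF cross_residual_bound]) (use assms in simp)
  finally show ?thesis .
qed

end

text \<open>Two approximating points on a lower band (k \<ge> 2), where the numerical constraints
  on the band are expressed through W, a bound for the determinant of the two lines.\<close>
locale approx_pair_deep = approx_pair +
  fixes W :: real
  assumes W_def: "W = (M * X / H) powr s * H"
    and W_small: "W powr (1+t) \<le> M / R^(k+4)"
    and HW_small: "H^2 * W powr s \<le> M / R^(k+3)"
    and H_small: "H^2 \<le> M / R^(k+1)"
    and c_small: "8 * c \<le> 1"
begin

lemma B_product_le: "B1 * B2 \<le> H^2"
  using band pos by (simp add: power2_eq_square mult_mono)

text \<open>Parallel lines whose residuals are small are in fact equal.\<close>
lemma parallel_lines_coincide:
  assumes "det12 = 0"
  shows "\<bar>num_x\<bar> < 1"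
proof -
  have "\<bar>num_x\<bar> < 8*c*R^(k+1)*(B1*B2)/M" using cross_residual_bound assms by (simp add: ac_simps)
  also have "\<dots> \<le> 8*c*R^(k+1)*(M/R^(k+1))/M"
    using B_product_le H_small pos M_pos R_pos
    by (intro divide_right_mono mult_left_mono order_trans[OF B_product_le H_small]) auto
  also have "\<dots> = 8*c" using M_pos R_pos by simp
  finally show ?thesis using c_small by simp
qed

lemma W_pos: "W > 0"
  unfolding W_def using M_pos H_pos X by simp

text \<open>Both denominators q_i are at most M X / H, which bounds the cross products of
  heights, and hence the determinant, by W.\<close>
lemma height_products_le: "\<bar>A1\<bar> * B2 \<le> W" "\<bar>A2\<bar> * B1 \<le> W"
proof -
  have q_le: "q \<le> M * X / H" if "q * B < M" "H/X \<le> B" "0 < q" "0 < B" for q B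
  proof -
    have "H \<le> B * X" using that X by (simp add: field_simps)
    then have "q * H \<le> (q * B) * X" using that mult_left_mono[of H "B * X" q] by (simp add: ac_simps)
    also have "\<dots> \<le> M * X" using that X by (simp add: mult_right_mono)
    finally show ?thesis using H_pos by (simp add: field_simps)
  qed
  have "\<bar>A\<bar> * B' \<le> W" if "\<bar>A\<bar> \<le> q powr s" "q \<le> M * X / H" "0 < q" "B' < H" "0 < B'" for A q B'
  proof -
    have "\<bar>A\<bar> \<le> (M * X / H) powr s" using that st powr_mono2[of s q "M*X/H"] by simp
    then show ?thesis unfolding W_def using that by (intro mult_mono) auto
  qed
  then show "\<bar>A1\<bar> * B2 \<le> W" "\<bar>A2\<bar> * B1 \<le> W"
    using q_le level band height pos by blast+
qed

lemma det_le: "\<bar>det12\<bar> \<le> 2 * W"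
  using height_products_le pos by (simp add: abs_mult abs_triangle_ineq4[THEN order_trans])

lemma det_powr_le:
  assumes "1 \<le> \<bar>det12\<bar>" "0 \<le> e"
  shows "\<bar>det12\<bar> powr e \<le> 2 powr e * W powr e"
proof -
  have "\<bar>det12\<bar> powr e \<le> (2 * W) powr e" using assms det_le by (intro powr_mono2) auto
  also have "\<dots> = 2 powr e * W powr e" using W_pos by (simp add: powr_mult)
  finally show ?thesis .
qed

lemma det_powr_1t_le:
  assumes "1 \<le> \<bar>det12\<bar>"
  shows "\<bar>det12\<bar> powr (1+t) \<le> 4 * (M / R^(k+4))"
proof -
  have "2 powr (1+t) \<le> 2 powr 2" using st by (intro powr_mono) auto
  then have "2 powr (1+t) * W powr (1+t) \<le> 4 * (M / R^(k+4))"
    using W_small by (intro mult_mono) auto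
  then show ?thesis using det_powr_le[OF assms, of "1+t"] st by simp
qed

text \<open>The intersection point has height well below the level of the two points.\<close>
lemma intersection_level:
  assumes "1 \<le> \<bar>det12\<bar>"
  shows "\<bar>det12\<bar> powr (1+t) < M / R^k"
proof -
  have "R^4 \<ge> 16^4" using R by (intro power_mono) auto
  then have "4 * (M / R^(k+4)) < M / R^k" using M_pos R_pos by (simp add: field_simps power_add)
  then show ?thesis using det_powr_1t_le[OF assms] by simp
qed

lemma intersection_approx_x:
  assumes "1 \<le> \<bar>det12\<bar>"
  shows "\<bar>x - (- num_x / det12)\<bar> < c / \<bar>det12\<bar> powr (1+s)"
proof -
  define a where "a = \<bar>det12\<bar>"
  have a: "a \<ge> 1" using assms by (simp add: a_def)
  have "B1 * B2 * a powr s \<le> H^2 * (2 * W powr s)"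
  proof (rule mult_mono[OF B_product_le])
    have "2 powr s \<le> 2 powr 1" using st by (intro powr_mono) auto
    then show "a powr s \<le> 2 * W powr s"
      using det_powr_le[OF assms, of s] st a_def mult_right_mono[of "2 powr s" 2 "W powr s"] by simp
  qed (use pos in auto)
  also have "\<dots> \<le> 2 * (M / R^(k+3))" using HW_small by simp
  finally have "B1 * B2 * a powr s \<le> 2 * (M / R^(k+3))" .
  then have "8*c*R^(k+1) * (B1 * B2 * a powr s) / M \<le> 8*c*R^(k+1) * (2 * (M / R^(k+3))) / M"
    using pos M_pos R_pos by (intro divide_right_mono mult_left_mono) auto
  then have "8*c*R^(k+1)*B1*B2/M * a powr s \<le> 8*c*R^(k+1) * (2 * (M / R^(k+3))) / M"
    by (simp add: ac_simps)
  also have "\<dots> = c * (16 / R^2)" using M_pos R_pos by (simp add: field_simps power_add power3_eq_cube power2_eq_square)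
  also have "\<dots> \<le> c" using R pos power_mono[OF R, of 2] by (simp add: field_simps)
  finally have T: "8*c*R^(k+1)*B1*B2/M \<le> c / a powr s" using a by (simp add: field_simps)
  have "\<bar>x - (- num_x / det12)\<bar> < (8*c*R^(k+1)*B1*B2/M) / a"
    using x_near_intersection a unfolding a_def by auto
  also have "\<dots> \<le> (c / a powr s) / a" using T a by (intro divide_right_mono) auto
  also have "\<dots> = c / a powr (1+s)" using a by (simp add: powr_one_plus)
  finally show ?thesis unfolding a_def .
qed

text \<open>The two contributions to B1 |y1 - y0| at the intersection point (x0, y0): the
  slope term |A1| |x - x0| and the residual of (x, y1) on the first line are each at most
  half of B1 c / |det|^(1+t).\<close>
lemma slope_term_le:
  assumes det: "1 \<le> \<bar>det12\<bar>"
  shows "\<bar>A1\<bar> * \<bar>x - (- num_x / det12)\<bar> \<le> B1 * (c / (2 * \<bar>det12\<bar> powr (1+t)))"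
proof -
  define a where "a = \<bar>det12\<bar>"
  have a: "1 \<le> a" using det by (simp add: a_def)
  have "\<bar>A1\<bar> * B2 * a powr t \<le> W * (2 * W powr t)"
  proof (rule mult_mono[OF height_products_le(1)])
    have "2 powr t \<le> 2 powr 1" using st by (intro powr_mono) auto
    then show "a powr t \<le> 2 * W powr t"
      using det_powr_le[OF det, of t] st mult_right_mono[of "2 powr t" 2 "W powr t"]
      unfolding a_def by simp
  qed (use W_pos in auto)
  also have "\<dots> = 2 * W powr (1+t)" using W_pos by (simp add: powr_one_plus)
  finally have heights: "\<bar>A1\<bar> * B2 * a powr t \<le> 2 * (M / R^(k+4))" using W_small by simp
  have "\<bar>A1\<bar> * \<bar>x - (- num_x / det12)\<bar> \<le> \<bar>A1\<bar> * ((8*c*R^(k+1)*B1*B2/M) / a)"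
    using less_imp_le[OF x_near_intersection] det unfolding a_def by (intro mult_left_mono) auto
  also have "\<dots> = (\<bar>A1\<bar> * B2 * a powr t) * (8*c*R^(k+1)*B1 / (M * a powr (1+t)))"
    using a M_pos by (simp add: powr_one_plus field_simps)
  also have "\<dots> \<le> (2 * (M / R^(k+4))) * (8*c*R^(k+1)*B1 / (M * a powr (1+t)))"
    using heights pos M_pos R_pos a by (intro mult_right_mono) auto
  also have "\<dots> = B1 * (c / (2 * a powr (1+t))) * (32 / R^3)"
    using M_pos R_pos a by (simp add: field_simps power_add eval_nat_numeral)
  also have "\<dots> \<le> B1 * (c / (2 * a powr (1+t)))"
    using power_mono[OF R, of 3] R_pos pos by (intro mult_left_le) (auto simp: divide_le_eq)
  finally show ?thesis unfolding a_def .
qed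

lemma residual_term_lt:
  assumes det: "1 \<le> \<bar>det12\<bar>"
  shows "\<bar>A1*x - B1*y1 + C1\<bar> < B1 * (c / (2 * \<bar>det12\<bar> powr (1+t)))"
proof -
  define bound where "bound = B1 * (c / (2 * \<bar>det12\<bar> powr (1+t)))"
  have "\<bar>A1*x - B1*y1 + C1\<bar> < 2*c/q1"
    using line_residual_bound pos height line approx_x approx_y by blast
  also have "\<dots> \<le> 2*c*R*B1/M" using level pos M_pos R_pos by (simp add: field_simps)
  also have "\<dots> = bound * (4 * R * \<bar>det12\<bar> powr (1+t) / M)"
    unfolding bound_def using det M_pos by (simp add: field_simps)
  also have "\<dots> \<le> bound * (4 * R * (4 * (M / R^(k+4))) / M)"
    using det_powr_1t_le[OF det] R_pos M_pos pos unfolding bound_def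
    by (intro mult_left_mono divide_right_mono) auto
  also have "\<dots> \<le> bound"
  proof -
    have "R^3 \<le> R^(k+3)" using R by (intro power_increasing) auto
    then have "16 \<le> R^(k+3)" using power_mono[OF R, of 3] by simp
    moreover have "R^(k+4) = R * R^(k+3)" by (simp add: eval_nat_numeral)
    ultimately have "4 * R * (4 * (M / R^(k+4))) / M \<le> 1" using R_pos M_pos by simp
    then show ?thesis using pos unfolding bound_def by (intro mult_left_le) auto
  qed
  finally show ?thesis unfolding bound_def .
qed

lemma intersection_approx_y:
  assumes det: "1 \<le> \<bar>det12\<bar>"
  shows "\<bar>y1 - num_y / det12\<bar> < c / \<bar>det12\<bar> powr (1+t)"
proof -
  have "B1 * (num_y / det12 - y1) = A1 * ((- num_x / det12) - x) + (A1*x - B1*y1 + C1)"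
    using det by (simp add: field_simps)
  then have "B1 * \<bar>y1 - num_y / det12\<bar> = \<bar>A1 * ((- num_x / det12) - x) + (A1*x - B1*y1 + C1)\<bar>"
    using pos by (metis abs_minus_commute abs_mult abs_of_pos)
  also have "\<dots> \<le> \<bar>A1\<bar> * \<bar>x - (- num_x / det12)\<bar> + \<bar>A1*x - B1*y1 + C1\<bar>"
    by (metis abs_minus_commute abs_mult abs_triangle_ineq)
  also have "\<dots> < B1 * (c / \<bar>det12\<bar> powr (1+t))"
    using slope_term_le[OF det] residual_term_lt[OF det] by (simp add: field_simps)
  finally show ?thesis using pos(3) by (simp only: mult_less_cancel_left_pos)
qed

end

section \<open>Exponents for the lower bands\<close>

lemma powr_bound_by_exponents:
  fixes M R \<alpha> \<rho> :: real and j :: nat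
  assumes "1 \<le> M" "1 \<le> R" "\<alpha> \<le> 1" "\<rho> \<le> - real j"
  shows "M powr \<alpha> * R powr \<rho> \<le> M / R^j"
proof -
  have "M powr \<alpha> \<le> M" using powr_mono[of \<alpha> 1 M] assms by simp
  moreover have "R powr \<rho> \<le> R powr (- real j)" using assms by (intro powr_mono) auto
  moreover have "R powr (- real j) = 1 / R^j" using assms(2) by (simp add: powr_minus powr_realpow divide_inverse)
  ultimately show ?thesis using assms(1) by (simp add: mult_mono divide_inverse)
qed

lemma powr_monomial_powr:
  fixes M R :: real
  shows "0 < M \<Longrightarrow> 0 < R \<Longrightarrow> (M powr \<alpha> * R powr \<rho>) powr u = M powr (u*\<alpha>) * R powr (u*\<rho>)"
  by (simp add: powr_mult powr_powr ac_simps)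

lemma powr_monomial_mult:
  fixes M R :: real
  shows "M powr \<alpha> * R powr \<rho> * (M powr \<alpha>' * R powr \<rho>') = M powr (\<alpha>+\<alpha>') * R powr (\<rho>+\<rho>')"
  by (simp add: powr_add ac_simps)

lemma powr_monomial_ratio_form:
  fixes M R :: real
  assumes "0 < M" "0 < R"
  shows "(M * R powr \<mu> / (M powr a * R powr e)) powr s * (M powr a * R powr e) =
    M powr (s*(1-a) + a) * R powr (s*(\<mu>-e) + e)"
proof -
  have "M * R powr \<mu> / (M powr a * R powr e) = M powr (1 - a) * R powr (\<mu> - e)"
    using assms by (simp add: powr_diff divide_inverse)
  then show ?thesis using assms by (simp add: powr_monomial_powr powr_monomial_mult)
qed

text \<open>Two exponent computations for the bands k \<ge> 2, with \<mu> = 1/(t(1+t)) and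
  e = -3/t^2 - (k-2)\<mu> the exponent of R at the top of the band.\<close>
lemma band_exponent_le:
  fixes t :: real and k :: nat
  assumes t: "0 < t" "t < 1" and k: "k \<ge> 2"
  shows "2 * (- (3 / t^2) - (real k - 2) * (1 / (t*(1+t)))) \<le> - real k - 4"
proof -
  define x where "x = real k - 2"
  define \<mu> where "\<mu> = 1 / (t*(1+t))"
  define v where "v = 3 / t^2"
  have "t * t \<le> 1" using t by (simp add: mult_le_one)
  then have "t * (1+t) \<le> 2" using t by (simp add: algebra_simps)
  then have "1/2 \<le> \<mu>" unfolding \<mu>_def using t by (intro frac_le) auto
  then have "x * (1/2) \<le> x * \<mu>" using k unfolding x_def by (intro mult_left_mono) auto
  moreover have "3 \<le> v" using \<open>t * t \<le> 1\<close> t unfolding v_def by (simp add: field_simps power2_eq_square)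
  moreover define e where "e = - v - x * \<mu>"
  ultimately have "2 * e \<le> - x - 6" by linarith
  then show ?thesis unfolding e_def x_def \<mu>_def v_def by simp
qed

lemma band_exponent_eq:
  fixes t :: real and k :: nat
  assumes t: "0 < t"
  defines "\<mu> \<equiv> 1 / (t*(1+t))"
  defines "e \<equiv> - (3 / t^2) - (real k - 2) * \<mu>"
  shows "(1+t) * ((1-t) * (\<mu> - e) + e) = - 2/t - 2 - real k"
proof -
  have "0 < t + t * t" using t by (simp add: add_pos_pos)
  then have m: "(1+t) * \<mu> = 1/t" "t * (1+t) * \<mu> = 1"
    using t unfolding \<mu>_def by (simp_all add: field_simps)
  define v where "v = 3 / t^2"
  have v: "t * v = 3 / t" using t unfolding v_def by (simp add: power2_eq_square)
  have "(1+t) * ((1-t) * (\<mu> - e) + e) = (1-t) * ((1+t) * \<mu>) - (1+t) * (t * v) - (real k - 2) * (t * (1+t) * \<mu>)"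
    unfolding e_def v_def[symmetric] by (simp add: algebra_simps)
  also have "\<dots> = (1-t)/t - (1+t) * (3/t) - (real k - 2)" unfolding m v by simp
  also have "\<dots> = - 2/t - 2 - real k" using t by (simp add: field_simps)
  finally show ?thesis .
qed

text \<open>The numerical constraints of approx_pair_deep hold for the bands k \<ge> 2: writing
  H = M^(t/(1+t)) R^e and W = (M R^\<mu> / H)^s H, both H and W are monomials in M and R
  whose exponents are controlled by the two lemmas above.\<close>
lemma band_exponents:
  fixes t M R :: real and k :: nat
  assumes t: "0 < t" "t < 1" and M: "M \<ge> 1" and R: "R \<ge> 16" and k: "k \<ge> 2"
  defines "s \<equiv> 1 - t"
  defines "e \<equiv> - (3 / t^2) - (real k - 2) * (1 / (t*(1+t)))"
  defines "H \<equiv> M powr (t/(1+t)) * R powr e"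
  defines "W \<equiv> (M * R powr (1 / (t*(1+t))) / H) powr s * H"
  shows "W powr (1+t) \<le> M / R^(k+4)" "H^2 * W powr s \<le> M / R^(k+3)" "H^2 \<le> M / R^(k+1)"
proof -
  define a where "a = t/(1+t)"
  define \<mu> where "\<mu> = 1 / (t*(1+t))"
  define \<alpha> where "\<alpha> = s*(1-a) + a"
  define \<rho> where "\<rho> = s*(\<mu>-e) + e"
  have MR: "M > 0" "R > 0" using M R by auto
  have W_eq: "W = M powr \<alpha> * R powr \<rho>"
    using powr_monomial_ratio_form[OF MR] unfolding W_def H_def \<alpha>_def \<rho>_def a_def \<mu>_def by simp
  have "H > 0" using MR unfolding H_def by simp
  then have "H^2 = H powr 2" by (simp add: powr_numeral)
  then have H2: "H^2 = M powr (2*a) * R powr (2*e)"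
    using MR powr_monomial_powr[of M R a e 2] unfolding H_def a_def by simp
  have two_e: "2*e \<le> - real k - 4" unfolding e_def using band_exponent_le[OF t k] .
  have a: "(1+t) * a = t" "(1+t) * (1-a) = 1" using t unfolding a_def by (simp_all add: field_simps)
  have W_M: "(1+t) * \<alpha> = 1" unfolding \<alpha>_def using a by (simp add: algebra_simps s_def)
  have W_R: "(1+t) * \<rho> \<le> - real (k+4)"
  proof -
    have "2 \<le> 2 / t" using t by (simp add: le_divide_eq)
    then show ?thesis using band_exponent_eq[OF t(1), of k] unfolding \<rho>_def s_def e_def \<mu>_def by simp
  qed
  have "W powr (1+t) = M powr ((1+t)*\<alpha>) * R powr ((1+t)*\<rho>)"
    unfolding W_eq using MR by (rule powr_monomial_powr)
  also have "\<dots> \<le> M / R^(k+4)" using W_M W_R M R by (intro powr_bound_by_exponents) auto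
  finally show "W powr (1+t) \<le> M / R^(k+4)" .
  have "(1+t) * \<rho> < 0" using W_R by simp
  then have "\<rho> \<le> 0" using t by (simp add: mult_less_0_iff)
  then have "s * \<rho> \<le> 0" using t unfolding s_def by (simp add: mult_nonneg_nonpos)
  have "H^2 * W powr s = M powr (2*a + s*\<alpha>) * R powr (2*e + s*\<rho>)"
    unfolding H2 W_eq using MR by (simp add: powr_monomial_powr powr_monomial_mult)
  also have "\<dots> \<le> M / R^(k+3)"
    using a W_M \<open>s * \<rho> \<le> 0\<close> two_e M R unfolding s_def \<alpha>_def
    by (intro powr_bound_by_exponents) (auto simp: algebra_simps)
  finally show "H^2 * W powr s \<le> M / R^(k+3)" .
  have "2*a \<le> 1" using t unfolding a_def by (simp add: field_simps)
  then show "H^2 \<le> M / R^(k+1)"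
    unfolding H2 using two_e M R by (intro powr_bound_by_exponents) auto
qed

section \<open>The setting of the theorem\<close>

lemma level_of_value:
  fixes h :: "nat \<Rightarrow> real"
  shows "h 1 \<le> x \<Longrightarrow> x < h (N+1) \<Longrightarrow> \<exists>j. 1 \<le> j \<and> j \<le> N \<and> h j \<le> x \<and> x < h (j+1)"
proof (induction N)
  case (Suc N)
  then show ?case by (cases "x < h (N+1)") (auto intro: le_SucI)
qed simp

text \<open>The hypotheses of the theorem, with the constants R, c and l only constrained by
  the inequalities they satisfy.\<close>
locale level_setting =
  fixes s t \<theta> a b l R c :: real and m :: nat
    and L :: "int \<times> int \<times> int \<Rightarrow> int \<times> int \<times> int" and I :: "nat list \<Rightarrow> real set"
    and n k :: nat and \<tau>' :: "nat list"
  assumes st: "s > 0" "t > 0" "s + t = 1"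
    and R: "R \<ge> 16" and c_pos: "c > 0" and l_def: "l = b - a"
    and c_le_l: "4 * c * R \<le> l" and c_small: "8 * c * R^2 * R powr (3 / t^2) \<le> 1"
    and L: "\<forall>P \<in> Cset s \<theta> c. line_through (L P) P \<and>
              real_of_int \<bar>fst (L P)\<bar> \<le> real_of_int (fst (snd P)) powr s \<and>
              real_of_int (Bof (L P)) \<le> real_of_int (fst (snd P)) powr t"
    and I: "good_I m R a b I"
    and nk: "1 \<le> k" "k \<le> n"
    and tau': "\<tau>' \<in> Sset m I (\<lambda>j. \<Union>P \<in> Cn s \<theta> c l R L j. Delta t c P) (n - k)"
begin

lemma R_pos: "R > 0" and l_pos: "l > 0"
  using R c_pos c_le_l by (auto intro: less_le_trans[of 0 "4 * c * R"])

lemma c_le_eighth: "8 * c \<le> 1"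
proof -
  have "1 \<le> R^2 * R powr (3 / t^2)"
    using R st mult_mono[of 1 "R^2" 1 "R powr (3 / t^2)"] by (simp add: one_le_power ge_one_powr_ge_zero)
  then have "8 * c \<le> 8 * c * R^2 * R powr (3 / t^2)"
    using c_pos by (simp add: mult_le_cancel_left1 mult.assoc)
  then show ?thesis using c_small by simp
qed

lemma Hn_eq: "Hn c l R j = 4 * c / l * R^j"
  unfolding Hn_def using l_pos by (simp add: powr_neg_one)

lemma point_data:
  assumes P: "(p,q,r) \<in> Cset s \<theta> c" and LP: "L (p,q,r) = (A,B,C)"
  shows "q > 0" "B > 0" "ratpt (p,q,r)" "gcd A (gcd B C) = 1" "A*p + C*q = B*r"
    "\<bar>\<theta> - real_of_int p / real_of_int q\<bar> < c / real_of_int q powr (1+s)"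
    "\<bar>real_of_int A\<bar> \<le> real_of_int q powr s" "real_of_int B \<le> real_of_int q powr t"
proof -
  show "ratpt (p,q,r)" "\<bar>\<theta> - real_of_int p / real_of_int q\<bar> < c / real_of_int q powr (1+s)"
    using P unfolding Cset_def by auto
  then show q: "q > 0" unfolding ratpt_def by simp
  have "line_through (A,B,C) (p,q,r)" "real_of_int \<bar>A\<bar> \<le> real_of_int q powr s"
    "real_of_int B \<le> real_of_int q powr t"
    using L P LP unfolding Bof_def by force+
  then show "gcd A (gcd B C) = 1" and B: "B > 0"
    and "\<bar>real_of_int A\<bar> \<le> real_of_int q powr s" "real_of_int B \<le> real_of_int q powr t"
    unfolding line_through_def by auto
  have "real_of_int r / real_of_int q =
      (real_of_int A * (real_of_int p / real_of_int q) + real_of_int C) / real_of_int B"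
    using \<open>line_through (A,B,C) (p,q,r)\<close> unfolding line_through_def by simp
  with B have "real_of_int B * (real_of_int r / real_of_int q) =
      real_of_int A * (real_of_int p / real_of_int q) + real_of_int C"
    by (simp add: field_simps)
  then show "A*p + C*q = B*r" using incidence_iff[OF q] by blast
qed

lemma tau'_vertex: "\<tau>' \<in> tree m" "length \<tau>' = n - k"
  using Sset_in_tree[OF tau'] by auto

lemma interval_of_vertex: "v \<in> tree m \<Longrightarrow> \<exists>u. I v = {u .. u + l / R^length v}"
  using I R_pos unfolding good_I_def l_def[symmetric] by (simp add: powr_minus powr_realpow divide_inverse)

lemma tau'_diameter: "y1 \<in> I \<tau>' \<Longrightarrow> y2 \<in> I \<tau>' \<Longrightarrow> \<bar>y1 - y2\<bar> \<le> l / R^(n-k)"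
  using interval_of_vertex[OF tau'_vertex(1)] tau'_vertex(2) by auto

lemma Cnk_subset_Cn: "Cnk s t \<theta> c l R L n k \<subseteq> Cn s \<theta> c l R L n"
  unfolding Cnk_def Let_def by auto

text \<open>Since \<tau>' survived the first n - k steps of the construction, its interval meets
  no \<Delta>(P) for points P of height q B_P below the level H_(n-k+1).\<close>
lemma lower_levels_avoid:
  assumes P: "(p,q,r) \<in> Cset s \<theta> c" and LP: "L (p,q,r) = (A,B,C)"
    and low: "real_of_int (q * B) < Hn c l R (n - k + 1)"
  shows "Delta t c (p,q,r) \<inter> I \<tau>' = {}"
proof -
  have "0 < q" "0 < B" using point_data[OF P LP] by auto
  then have "1 \<le> real_of_int (q * B)" using mult_pos_pos[of q B] by linarith
  moreover have "Hn c l R 1 \<le> 1" unfolding Hn_eq using c_le_l l_pos by (simp add: field_simps)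
  ultimately have "Hn c l R 1 \<le> real_of_int (q * B)" by linarith
  then obtain j where j: "1 \<le> j" "j \<le> n - k" "Hn c l R j \<le> real_of_int (q * B)"
      "real_of_int (q * B) < Hn c l R (j+1)"
    using level_of_value[of "Hn c l R", OF _ low] by blast
  then have "(p,q,r) \<in> Cn s \<theta> c l R L j" using P LP unfolding Cn_def Bof_def by simp
  moreover obtain j' where "j = Suc j'" using j(1) by (cases j) auto
  moreover have "take j \<tau>' \<in> Sset m I (\<lambda>j. \<Union>P \<in> Cn s \<theta> c l R L j. Delta t c P) j"
    using Sset_take[OF tau' j(2)] .
  ultimately have "I (take j \<tau>') \<inter> Delta t c (p,q,r) = {}" by auto
  moreover have "I \<tau>' \<subseteq> I (take j \<tau>')"
    using good_I_mono[OF I tau'_vertex(1)] by (simp add: take_is_prefix)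
  ultimately show ?thesis by blast
qed

lemma no_low_approximation:
  fixes D N Y :: int
  assumes D: "D \<noteq> 0"
    and x: "\<bar>\<theta> - (- real_of_int N / real_of_int D)\<bar> < c / \<bar>real_of_int D\<bar> powr (1+s)"
    and y: "\<bar>y - real_of_int Y / real_of_int D\<bar> < c / \<bar>real_of_int D\<bar> powr (1+t)"
    and low: "\<bar>real_of_int D\<bar> powr (1+t) < Hn c l R (n - k + 1)"
    and y_in: "y \<in> I \<tau>'"
  shows False
proof -
  obtain p q r where P: "ratpt (p,q,r)" "q \<le> \<bar>D\<bar>"
      "real_of_int p / real_of_int q = - real_of_int N / real_of_int D"
      "real_of_int r / real_of_int q = real_of_int Y / real_of_int D"
    using reduced_fraction_exists[OF D] by blast
  have q: "0 < real_of_int q" "real_of_int q \<le> \<bar>real_of_int D\<bar>" using P(1,2) by (auto simp: ratpt_def)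
  have smaller: "c / \<bar>real_of_int D\<bar> powr (1+e) \<le> c / real_of_int q powr (1+e)" if "0 \<le> e" for e
    using q c_pos that by (intro divide_left_mono powr_mono2 mult_pos_pos) auto
  have PC: "(p,q,r) \<in> Cset s \<theta> c"
    using P(1,3) x smaller[of s] st unfolding Cset_def by simp
  have "y \<in> Delta t c (p,q,r)" using P(4) y smaller[of t] st unfolding Delta_def by simp
  moreover obtain A B C where LP: "L (p,q,r) = (A,B,C)" by (cases "L (p,q,r)")
  moreover have "real_of_int (q * B) < Hn c l R (n - k + 1)"
  proof -
    have "real_of_int (q * B) \<le> real_of_int q * real_of_int q powr t"
      using point_data[OF PC LP] q by simp
    also have "\<dots> \<le> \<bar>real_of_int D\<bar> powr (1+t)"
      using q st by (simp add: powr_one_plus[symmetric] powr_mono2)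
    finally show ?thesis using low by simp
  qed
  ultimately show False using lower_levels_avoid[OF PC] y_in by blast
qed

lemma delta_near_line:
  assumes P: "(p,q,r) \<in> Cn s \<theta> c l R L n" and LP: "L (p,q,r) = (A,B,C)"
    and y: "y \<in> Delta t c (p,q,r)"
  shows "\<bar>y - (real_of_int A * \<theta> + real_of_int C) / real_of_int B\<bar> < (l / R^n) / 2"
proof -
  have PC: "(p,q,r) \<in> Cset s \<theta> c" using P unfolding Cn_def by simp
  note data = point_data[OF PC LP]
  define x where "x = real_of_int p / real_of_int q"
  define w where "w = real_of_int r / real_of_int q"
  have q: "real_of_int q > 0" and B: "real_of_int B > 0" using data by auto
  have qB: "c / (real_of_int q * real_of_int B) \<le> (l / R^n) / 4"
  proof -
    have "Hn c l R n \<le> real_of_int q * real_of_int B" using P LP unfolding Cn_def Bof_def by simp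
    moreover have "0 < Hn c l R n" unfolding Hn_eq using c_pos l_pos R_pos by simp
    ultimately have "c / (real_of_int q * real_of_int B) \<le> c / Hn c l R n"
      using c_pos q B by (intro divide_left_mono) auto
    also have "\<dots> = (l / R^n) / 4" unfolding Hn_eq using c_pos l_pos R_pos by simp
    finally show ?thesis .
  qed
  have "\<bar>y - w\<bar> < c / real_of_int q powr (1+t)" using y unfolding w_def Delta_def by simp
  also have "\<dots> \<le> c / (real_of_int q * real_of_int B)"
    using data(8) q B c_pos by (intro divide_left_mono) (auto simp: powr_one_plus)
  finally have near_point: "\<bar>y - w\<bar> < c / (real_of_int q * real_of_int B)" .
  have "real_of_int B * w = real_of_int A * x + real_of_int C"
    using data(1,5) incidence_iff unfolding x_def w_def by blast
  then have "w - (real_of_int A * \<theta> + real_of_int C) / real_of_int B = real_of_int A * (x - \<theta>) / real_of_int B"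
    using B by (simp add: field_simps)
  then have "\<bar>w - (real_of_int A * \<theta> + real_of_int C) / real_of_int B\<bar>
      = \<bar>real_of_int A\<bar> * \<bar>\<theta> - x\<bar> / real_of_int B"
    using B by (simp add: abs_mult abs_divide abs_minus_commute)
  also have "\<dots> \<le> (c / real_of_int q) / real_of_int B"
    using data(6,7) q B unfolding x_def by (intro divide_right_mono height_times_error_le) auto
  finally have near_line: "\<bar>w - (real_of_int A * \<theta> + real_of_int C) / real_of_int B\<bar>
      \<le> c / (real_of_int q * real_of_int B)" by simp
  have "\<bar>y - (real_of_int A * \<theta> + real_of_int C) / real_of_int B\<bar>
      \<le> \<bar>y - w\<bar> + \<bar>w - (real_of_int A * \<theta> + real_of_int C) / real_of_int B\<bar>"
    using abs_triangle_ineq[of "y - w" "w - (real_of_int A * \<theta> + real_of_int C) / real_of_int B"]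
    by simp
  moreover define d where "d = c / (real_of_int q * real_of_int B)"
  moreover define len where "len = l / R^n"
  ultimately show ?thesis using near_point near_line qB by (simp flip: d_def len_def)
qed

lemma approx_pair_of_points:
  assumes P1: "(p1,q1,r1) \<in> Cn s \<theta> c l R L n" "L (p1,q1,r1) = (A1,B1,C1)"
      "y1 \<in> Delta t c (p1,q1,r1)" "y1 \<in> I \<tau>'"
    and P2: "(p2,q2,r2) \<in> Cn s \<theta> c l R L n" "L (p2,q2,r2) = (A2,B2,C2)"
      "y2 \<in> Delta t c (p2,q2,r2)" "y2 \<in> I \<tau>'"
    and band: "H/X \<le> real_of_int B1" "real_of_int B1 < H" "H/X \<le> real_of_int B2" "real_of_int B2 < H"
    and X: "X \<ge> 1"
  shows "approx_pair (real_of_int A1) (real_of_int B1) (real_of_int C1)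
    (real_of_int p1) (real_of_int q1) (real_of_int r1)
    (real_of_int A2) (real_of_int B2) (real_of_int C2)
    (real_of_int p2) (real_of_int q2) (real_of_int r2)
    \<theta> y1 y2 c s t R (Hn c l R (n+1)) (l / R^(n-k)) H X k"
proof -
  have C: "(p1,q1,r1) \<in> Cset s \<theta> c" "(p2,q2,r2) \<in> Cset s \<theta> c" using P1 P2 unfolding Cn_def by auto
  note d1 = point_data[OF C(1) P1(2)] and d2 = point_data[OF C(2) P2(2)]
  have "Hn c l R (n+1) / R = Hn c l R n" unfolding Hn_eq using R_pos by simp
  then have level: "Hn c l R (n+1) / R \<le> real_of_int q1 * real_of_int B1"
    "real_of_int q1 * real_of_int B1 < Hn c l R (n+1)"
    "Hn c l R (n+1) / R \<le> real_of_int q2 * real_of_int B2"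
    "real_of_int q2 * real_of_int B2 < Hn c l R (n+1)"
    using P1 P2 unfolding Cn_def Bof_def by auto
  have "R^(n+1) = R^(n-k) * R^(k+1)" using nk by (simp flip: power_add)
  then have "Hn c l R (n+1) * (l / R^(n-k)) = 4 * c * R^(k+1)"
    unfolding Hn_eq using l_pos R_pos by simp
  moreover have "real_of_int B1 * (real_of_int r1 / real_of_int q1) =
      real_of_int A1 * (real_of_int p1 / real_of_int q1) + real_of_int C1"
    "real_of_int B2 * (real_of_int r2 / real_of_int q2) =
      real_of_int A2 * (real_of_int p2 / real_of_int q2) + real_of_int C2"
    using d1 d2 incidence_iff by blast+
  ultimately show ?thesis
    using d1 d2 st R X band level tau'_diameter[OF P1(4) P2(4)] P1(3) P2(3) c_pos
    unfolding approx_pair_def Delta_def by simp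
qed

lemma top_band_bounds:
  assumes "k = 1" "P \<in> Cnk s t \<theta> c l R L n k" "L P = (A,B,C)"
  defines "H \<equiv> Hn c l R (n+1) powr (t/(1+t))"
  shows "H / R powr (3/t^2) \<le> real_of_int B" "real_of_int B < H"
proof -
  have "H * R powr (- (3/t^2)) = H / R powr (3/t^2)" by (simp add: powr_minus divide_inverse)
  then show "H / R powr (3/t^2) \<le> real_of_int B" "real_of_int B < H"
    using assms unfolding Cnk_def Let_def Bof_def by auto
qed

lemma lower_band_bounds:
  assumes "2 \<le> k" "P \<in> Cnk s t \<theta> c l R L n k" "L P = (A,B,C)"
  defines "H \<equiv> Hn c l R (n+1) powr (t/(1+t)) * R powr (- (3/t^2) - (real k - 2) * (1/(t*(1+t))))"
  shows "H / R powr (1/(t*(1+t))) \<le> real_of_int B" "real_of_int B < H"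
proof -
  define \<mu> where "\<mu> = 1/(t*(1+t))"
  have exponent: "- (3/t^2) - (real k - 1) * \<mu> = (- (3/t^2) - (real k - 2) * \<mu>) - \<mu>"
    by (simp add: algebra_simps)
  have "Hn c l R (n+1) powr (t/(1+t)) * R powr (- (3/t^2) - (real k - 1) * (1/(t*(1+t))))
      = H / R powr (1/(t*(1+t)))"
    unfolding H_def \<mu>_def[symmetric] exponent by (simp add: powr_diff)
  then show "H / R powr (1/(t*(1+t))) \<le> real_of_int B" "real_of_int B < H"
    using assms nk unfolding Cnk_def Let_def Bof_def by auto
qed

text \<open>For the top band k = 1, two points whose \<Delta>'s meet the interval of \<tau>' have the
  same line: each lies on the line of the other, so the points or the lines coincide.\<close>
lemma same_line_top_band:
  assumes k: "k = 1"
    and P1: "(p1,q1,r1) \<in> Cnk s t \<theta> c l R L n k" "y1 \<in> Delta t c (p1,q1,r1)" "y1 \<in> I \<tau>'"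
    and P2: "(p2,q2,r2) \<in> Cnk s t \<theta> c l R L n k" "y2 \<in> Delta t c (p2,q2,r2)" "y2 \<in> I \<tau>'"
  shows "L (p1,q1,r1) = L (p2,q2,r2)"
proof -
  obtain A1 B1 C1 where L1: "L (p1,q1,r1) = (A1,B1,C1)" by (cases "L (p1,q1,r1)")
  obtain A2 B2 C2 where L2: "L (p2,q2,r2) = (A2,B2,C2)" by (cases "L (p2,q2,r2)")
  define H where "H = Hn c l R (n+1) powr (t/(1+t))"
  define X where "X = R powr (3/t^2)"
  have band: "H/X \<le> real_of_int B1" "real_of_int B1 < H" "H/X \<le> real_of_int B2" "real_of_int B2 < H"
    using top_band_bounds[OF k P1(1) L1] top_band_bounds[OF k P2(1) L2] unfolding H_def X_def by auto
  have X: "X \<ge> 1" unfolding X_def using R st by (intro ge_one_powr_ge_zero) auto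
  have Cn: "(p1,q1,r1) \<in> Cn s \<theta> c l R L n" "(p2,q2,r2) \<in> Cn s \<theta> c l R L n"
    using P1(1) P2(1) Cnk_subset_Cn by auto
  then have C: "(p1,q1,r1) \<in> Cset s \<theta> c" "(p2,q2,r2) \<in> Cset s \<theta> c" unfolding Cn_def by auto
  interpret approx_pair "real_of_int A1" "real_of_int B1" "real_of_int C1"
      "real_of_int p1" "real_of_int q1" "real_of_int r1"
      "real_of_int A2" "real_of_int B2" "real_of_int C2"
      "real_of_int p2" "real_of_int q2" "real_of_int r2"
      \<theta> y1 y2 c s t R "Hn c l R (n+1)" "l / R^(n-k)" H X k
    by (rule approx_pair_of_points[OF Cn(1) L1 P1(2,3) Cn(2) L2 P2(2,3) band X])
  have small: "8 * c * R^2 * X \<le> 1" using c_small unfolding X_def .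
  have "A2*p1 + C2*q1 - B2*r1 = 0"
    by (rule small_int_eq_0) (use first_point_on_second_line[OF k small] in simp)
  moreover have "A1*p2 + C1*q2 - B1*r2 = 0"
    by (rule small_int_eq_0)
      (use approx_pair.first_point_on_second_line[OF approx_pair_swap[OF approx_pair_axioms] k small] in simp)
  moreover note d1 = point_data[OF C(1) L1] and d2 = point_data[OF C(2) L2]
  ultimately have "(p1,q1,r1) = (p2,q2,r2) \<or> (A1,B1,C1) = (A2,B2,C2)"
    by (intro points_or_lines_coincide[OF d1(3) d2(3) d1(4) d2(4) d1(2) d2(2) d1(5)] d2(5)) auto
  then show ?thesis using L1 L2 by auto
qed

lemma approx_pair_deep_of_points:
  assumes k: "2 \<le> k"
    and P1: "(p1,q1,r1) \<in> Cnk s t \<theta> c l R L n k" "L (p1,q1,r1) = (A1,B1,C1)"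
      "y1 \<in> Delta t c (p1,q1,r1)" "y1 \<in> I \<tau>'"
    and P2: "(p2,q2,r2) \<in> Cnk s t \<theta> c l R L n k" "L (p2,q2,r2) = (A2,B2,C2)"
      "y2 \<in> Delta t c (p2,q2,r2)" "y2 \<in> I \<tau>'"
  shows "\<exists>H X W. approx_pair_deep (real_of_int A1) (real_of_int B1) (real_of_int C1)
    (real_of_int p1) (real_of_int q1) (real_of_int r1)
    (real_of_int A2) (real_of_int B2) (real_of_int C2)
    (real_of_int p2) (real_of_int q2) (real_of_int r2)
    \<theta> y1 y2 c s t R (Hn c l R (n+1)) (l / R^(n-k)) H X k W"
proof -
  define M where "M = Hn c l R (n+1)"
  define H where "H = M powr (t/(1+t)) * R powr (- (3/t^2) - (real k - 2) * (1/(t*(1+t))))"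
  define X where "X = R powr (1/(t*(1+t)))"
  define W where "W = (M * X / H) powr s * H"
  have band: "H/X \<le> real_of_int B1" "real_of_int B1 < H" "H/X \<le> real_of_int B2" "real_of_int B2 < H"
    using lower_band_bounds[OF k P1(1,2)] lower_band_bounds[OF k P2(1,2)]
    unfolding H_def X_def M_def by auto
  have X: "X \<ge> 1" unfolding X_def using R st by (intro ge_one_powr_ge_zero) auto
  have Cn: "(p1,q1,r1) \<in> Cn s \<theta> c l R L n" "(p2,q2,r2) \<in> Cn s \<theta> c l R L n"
    using P1(1) P2(1) Cnk_subset_Cn by auto
  interpret approx_pair "real_of_int A1" "real_of_int B1" "real_of_int C1"
      "real_of_int p1" "real_of_int q1" "real_of_int r1"
      "real_of_int A2" "real_of_int B2" "real_of_int C2"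
      "real_of_int p2" "real_of_int q2" "real_of_int r2"
      \<theta> y1 y2 c s t R M "l / R^(n-k)" H X k
    unfolding M_def by (rule approx_pair_of_points[OF Cn(1) P1(2-4) Cn(2) P2(2-4) band X])
  have "(p1,q1,r1) \<in> Cset s \<theta> c" using Cn(1) unfolding Cn_def by simp
  then have "0 < q1 * B1" using point_data[OF _ P1(2)] by simp
  then have "1 \<le> q1 * B1" by linarith
  then have "1 \<le> real_of_int q1 * real_of_int B1" by (metis of_int_1_le_iff of_int_mult)
  then have M1: "1 \<le> M" using level(2) by linarith
  have "t < 1" "s = 1 - t" using st by auto
  then have exps: "W powr (1+t) \<le> M / R^(k+4)" "H^2 * W powr s \<le> M / R^(k+3)" "H^2 \<le> M / R^(k+1)"
    using band_exponents[OF st(2) _ M1 R k] unfolding W_def H_def X_def by simp_all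
  have "approx_pair_deep (real_of_int A1) (real_of_int B1) (real_of_int C1)
    (real_of_int p1) (real_of_int q1) (real_of_int r1)
    (real_of_int A2) (real_of_int B2) (real_of_int C2)
    (real_of_int p2) (real_of_int q2) (real_of_int r2)
    \<theta> y1 y2 c s t R M (l / R^(n-k)) H X k W"
    using c_le_eighth W_def exps
    by (intro approx_pair_deep.intro approx_pair_axioms approx_pair_deep_axioms.intro) auto
  then show ?thesis unfolding M_def by blast
qed

text \<open>For a lower band k \<ge> 2, two points whose \<Delta>'s meet the interval of \<tau>' have the
  same line: otherwise the intersection of their lines would be a rational
  approximation of lower level whose \<Delta> meets that interval.\<close>
lemma same_line_lower_band:
  assumes k: "2 \<le> k"
    and P1: "(p1,q1,r1) \<in> Cnk s t \<theta> c l R L n k" "y1 \<in> Delta t c (p1,q1,r1)" "y1 \<in> I \<tau>'"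
    and P2: "(p2,q2,r2) \<in> Cnk s t \<theta> c l R L n k" "y2 \<in> Delta t c (p2,q2,r2)" "y2 \<in> I \<tau>'"
  shows "L (p1,q1,r1) = L (p2,q2,r2)"
proof -
  obtain A1 B1 C1 where L1: "L (p1,q1,r1) = (A1,B1,C1)" by (cases "L (p1,q1,r1)")
  obtain A2 B2 C2 where L2: "L (p2,q2,r2) = (A2,B2,C2)" by (cases "L (p2,q2,r2)")
  obtain H X W where "approx_pair_deep (real_of_int A1) (real_of_int B1) (real_of_int C1)
      (real_of_int p1) (real_of_int q1) (real_of_int r1)
      (real_of_int A2) (real_of_int B2) (real_of_int C2)
      (real_of_int p2) (real_of_int q2) (real_of_int r2)
      \<theta> y1 y2 c s t R (Hn c l R (n+1)) (l / R^(n-k)) H X k W"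
    using approx_pair_deep_of_points[OF k P1(1) L1 P1(2,3) P2(1) L2 P2(2,3)] by blast
  then interpret approx_pair_deep "real_of_int A1" "real_of_int B1" "real_of_int C1"
      "real_of_int p1" "real_of_int q1" "real_of_int r1"
      "real_of_int A2" "real_of_int B2" "real_of_int C2"
      "real_of_int p2" "real_of_int q2" "real_of_int r2"
      \<theta> y1 y2 c s t R "Hn c l R (n+1)" "l / R^(n-k)" H X k W .
  have C: "(p1,q1,r1) \<in> Cset s \<theta> c" "(p2,q2,r2) \<in> Cset s \<theta> c"
    using P1(1) P2(1) Cnk_subset_Cn unfolding Cn_def by auto
  note d1 = point_data[OF C(1) L1] and d2 = point_data[OF C(2) L2]
  show ?thesis
  proof (cases "A1*B2 - A2*B1 = 0")
    case True
    then have "det12 = 0" by (metis of_int_0 of_int_diff of_int_mult)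
    then have "\<bar>real_of_int (B2*C1 - B1*C2)\<bar> < 1" using parallel_lines_coincide by simp
    then have "B2*C1 - B1*C2 = 0" by (rule small_int_eq_0)
    then have "(A1,B1,C1) = (A2,B2,C2)"
      using primitive_triples_eq[OF d1(4) d2(4) d1(2) d2(2)] True by (simp add: algebra_simps)
    then show ?thesis using L1 L2 by simp
  next
    case False
    then have det: "1 \<le> \<bar>det12\<bar>" by (simp flip: of_int_mult of_int_diff)
    have "R^(n+1) = R^(n-k+1) * R^k" using nk by (simp flip: power_add)
    then have "Hn c l R (n+1) / R^k = Hn c l R (n - k + 1)" unfolding Hn_eq using R_pos by simp
    then have "\<bar>det12\<bar> powr (1+t) < Hn c l R (n - k + 1)" using intersection_level[OF det] by simp
    then show ?thesis
      using no_low_approximation[OF False, of "B2*C1 - B1*C2" y1 "A1*C2 - A2*C1"]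
        intersection_approx_x[OF det] intersection_approx_y[OF det] P1(3)
      by (simp add: abs_minus_commute)
  qed
qed

lemma same_line:
  assumes "P1 \<in> Cnk s t \<theta> c l R L n k" "y1 \<in> Delta t c P1" "y1 \<in> I \<tau>'"
    and "P2 \<in> Cnk s t \<theta> c l R L n k" "y2 \<in> Delta t c P2" "y2 \<in> I \<tau>'"
  shows "L P1 = L P2"
proof -
  obtain p1 q1 r1 p2 q2 r2 where P: "P1 = (p1,q1,r1)" "P2 = (p2,q2,r2)" by (cases P1, cases P2)
  show ?thesis
  proof (cases "k = 1")
    case True
    show ?thesis using same_line_top_band[OF True] assms unfolding P .
  next
    case False
    then have "2 \<le> k" using nk by simp
    show ?thesis using same_line_lower_band[OF \<open>2 \<le> k\<close>] assms unfolding P .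
  qed
qed

lemma deltas_cluster:
  "\<exists>y0. \<forall>P \<in> Cnk s t \<theta> c l R L n k. \<forall>z \<in> Delta t c P \<inter> I \<tau>'. \<bar>z - y0\<bar> < (l / R^n) / 2"
proof (cases "\<exists>P0 \<in> Cnk s t \<theta> c l R L n k. Delta t c P0 \<inter> I \<tau>' \<noteq> {}")
  case True
  then obtain P0 z0 where P0: "P0 \<in> Cnk s t \<theta> c l R L n k" "z0 \<in> Delta t c P0" "z0 \<in> I \<tau>'" by blast
  obtain A B C where LP0: "L P0 = (A,B,C)" by (cases "L P0")
  have "\<bar>z - (real_of_int A * \<theta> + real_of_int C) / real_of_int B\<bar> < (l / R^n) / 2"
    if P: "P \<in> Cnk s t \<theta> c l R L n k" and z: "z \<in> Delta t c P \<inter> I \<tau>'" for P z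
  proof -
    obtain p q r where Pe: "P = (p,q,r)" by (cases P)
    have "L P = (A,B,C)" using same_line[OF P IntD1[OF z] IntD2[OF z] P0] LP0 by simp
    moreover have "P \<in> Cn s \<theta> c l R L n" using P Cnk_subset_Cn by blast
    ultimately show ?thesis using delta_near_line z unfolding Pe by simp
  qed
  then show ?thesis by blast
qed auto

lemma hit_vertices_at_most_two:
  defines "S \<equiv> {\<tau> \<in> tree m. length \<tau> = n \<and> prefix \<tau>' \<tau> \<and>
                 I \<tau> \<inter> (\<Union>P \<in> Cnk s t \<theta> c l R L n k. Delta t c P) \<noteq> {}}"
  shows "finite S \<and> card S \<le> 2"
proof -
  obtain y0 where y0: "\<forall>P \<in> Cnk s t \<theta> c l R L n k. \<forall>z \<in> Delta t c P \<inter> I \<tau>'. \<bar>z - y0\<bar> < (l / R^n) / 2"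
    using deltas_cluster by blast
  have "finite S"
    by (rule finite_subset[OF _ finite_lists_length_eq[of "{..<m}" n]]) (auto simp: S_def tree_def)
  moreover have "card S \<le> 2"
  proof (rule at_most_two_intervals_near_point[OF \<open>finite S\<close>])
    show "\<exists>u. I \<tau> = {u .. u + l / R^n}" if "\<tau> \<in> S" for \<tau>
      using that interval_of_vertex unfolding S_def by auto
    show "interior (I \<tau>1) \<inter> interior (I \<tau>2) = {}" if "\<tau>1 \<in> S" "\<tau>2 \<in> S" "\<tau>1 \<noteq> \<tau>2" for \<tau>1 \<tau>2
      using that good_I_disjoint_interiors[OF I] unfolding S_def by auto
    show "I \<tau> \<inter> {z. \<bar>z - y0\<bar> < (l / R^n) / 2} \<noteq> {}" if \<tau>: "\<tau> \<in> S" for \<tau>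
    proof -
      obtain P z where "P \<in> Cnk s t \<theta> c l R L n k" "z \<in> Delta t c P" "z \<in> I \<tau>"
        using \<tau> unfolding S_def by blast
      moreover have "I \<tau> \<subseteq> I \<tau>'" using \<tau> good_I_mono[OF I] unfolding S_def by auto
      ultimately show ?thesis using y0 by blast
    qed
  qed
  ultimately show ?thesis by blast
qed

end

lemma constant_bounds:
  fixes s t \<theta> \<beta> l :: real
  assumes beta: "0 < \<beta>" "\<beta> < 1" and dio: "dioph_inf s \<theta> > 0" and l: "l > 0"
    and R_def: "R = Rpar \<beta>" and c_def: "c = cconst s t \<theta> \<beta> l"
  shows "R \<ge> 16" "c > 0" "4 * c * R \<le> l" "8 * c * R^2 * R powr (3 / t^2) \<le> 1"
proof -
  have "\<beta> powr 4 \<le> 1" "\<beta> powr 4 > 0" using beta powr_le1[of 4 \<beta>] by auto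
  then have "\<beta> powr (-4) \<ge> 1" by (simp add: powr_minus field_simps)
  then show R: "R \<ge> 16" unfolding R_def Rpar_def by simp
  have c: "c = min (dioph_inf s \<theta>) (min (1/4 * l * R powr (-1)) (1/8 * R powr (-2 - 3/t^2)))"
    unfolding c_def cconst_def R_def ..
  then show "c > 0" using dio l R by simp
  have "c \<le> l / (4 * R)" using c R by (simp add: powr_neg_one)
  then show "4 * c * R \<le> l" using R by (simp add: field_simps)
  have "8 * c \<le> R powr (-2 - 3/t^2)" using c by simp
  moreover have "R^2 = R powr 2" using R by (simp add: powr_numeral)
  ultimately have "8 * c * R^2 * R powr (3/t^2) \<le> R powr (-2 - 3/t^2) * R powr 2 * R powr (3/t^2)"
    using R by (intro mult_right_mono) auto
  also have "\<dots> = R powr ((-2 - 3/t^2) + 2 + 3/t^2)" by (simp only: powr_add)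
  also have "\<dots> = 1" using R by simp
  finally show "8 * c * R^2 * R powr (3 / t^2) \<le> 1" .
qed

theorem lemma4p3:
  fixes s t \<theta> \<beta> a b :: real
    and L :: "int \<times> int \<times> int \<Rightarrow> int \<times> int \<times> int"
    and I :: "nat list \<Rightarrow> real set"
    and n k :: nat and \<tau>' :: "nat list"
  defines "R \<equiv> Rpar \<beta>"
  defines "l \<equiv> b - a"
  defines "m \<equiv> nat \<lfloor>R\<rfloor>"
  defines "c \<equiv> cconst s t \<theta> \<beta> l"
  assumes st: "s > 0" "t > 0" "s + t = 1"
    and dio: "dioph_inf s \<theta> > 0"
    and beta: "0 < \<beta>" "\<beta> < 1"
    and ab: "a < b"
    and L: "\<forall>P \<in> Cset s \<theta> c. line_through (L P) P \<and>
              real_of_int \<bar>fst (L P)\<bar> \<le> real_of_int (fst (snd P)) powr s \<and>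
              real_of_int (Bof (L P)) \<le> real_of_int (fst (snd P)) powr t"
    and I: "good_I m R a b I"
    and nk: "1 \<le> n" "1 \<le> k" "k \<le> n"
    and tau': "\<tau>' \<in> Sset m I (\<lambda>j. \<Union>P \<in> Cn s \<theta> c l R L j. Delta t c P) (n - k)"
  shows "finite {\<tau> \<in> tree m. length \<tau> = n \<and> prefix \<tau>' \<tau> \<and>
                   I \<tau> \<inter> (\<Union>P \<in> Cnk s t \<theta> c l R L n k. Delta t c P) \<noteq> {}}
      \<and> card {\<tau> \<in> tree m. length \<tau> = n \<and> prefix \<tau>' \<tau> \<and>
                   I \<tau> \<inter> (\<Union>P \<in> Cnk s t \<theta> c l R L n k. Delta t c P) \<noteq> {}} \<le> 2"
proof -
  have "R \<ge> 16" "c > 0" "4 * c * R \<le> l" "8 * c * R^2 * R powr (3 / t^2) \<le> 1"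
    using constant_bounds[OF beta dio _ meta_eq_to_obj_eq[OF R_def] meta_eq_to_obj_eq[OF c_def]] ab
    unfolding l_def by auto
  then interpret level_setting s t \<theta> a b l R c m L I n k \<tau>'
    using st L I nk tau' unfolding l_def by unfold_locales auto
  show ?thesis using hit_vertices_at_most_two by simp
qed

end
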